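(* Let $r\ge 2$ and $F\in\mathcal{F}_r(n)$. If $F\not\cong T_r(n)$, then there is a vertex $u\in V(F)$ such that \[ e\bigl(F[N_F(u)]\bigr)>e\bigl(T_{r-1}(d_F(u))\bigr). \]
   Context: $e(\cdot)$ is the number of edges; $N_F(u)$ and $d_F(u)$ are the neighborhood and degree of $u$ in $F$, and $F[X]$ is the induced subgraph. $T_k(m)$ is the complete $k$-partite graph on $m$ vertices with part sizes differing by at most one. The family $\mathcal{F}_r(n)$: write $n=ra+b$ with $0\le b<r$ and $a=\lfloor n/r\rfloor\ge 1$. If $b=0$, $\mathcal{F}_r(n)$ is the set of all $(r-1)a$-regular graphs on $n$ vertices. If $1\le b<r$, $\mathcal{F}_r(n)$ is the set of all graphs $G$ on $n$ vertices having a partition $V(G)=X\sqcup Y$ with $|X|=b(a+1)$, $|Y|=(r-b)a$, such that every vertex of $X$ is adjacent to every vertex of $Y$, $G[X]$ is $(b-1)(a+1)$-regular, and $G[Y]$ is $(r-b-1)a$-regular. *)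

theory Defs
  imports Main
begin

type_synonym 'a graph = "'a set \<times> 'a set set"

definition verts :: "'a graph \<Rightarrow> 'a set" where "verts G = fst G"
definition edges :: "'a graph \<Rightarrow> 'a set set" where "edges G = snd G"

definition simple_graph :: "'a graph \<Rightarrow> bool" where
  "simple_graph G \<longleftrightarrow> finite (verts G) \<and>
     (\<forall>e\<in>edges G. \<exists>x y. x \<noteq> y \<and> x \<in> verts G \<and> y \<in> verts G \<and> e = {x, y})"

definition nbhd :: "'a graph \<Rightarrow> 'a \<Rightarrow> 'a set" where
  "nbhd G u = {v \<in> verts G. {u, v} \<in> edges G}"

definition degree :: "'a graph \<Rightarrow> 'a \<Rightarrow> nat" where
  "degree G u = card (nbhd G u)"

definition induced :: "'a graph \<Rightarrow> 'a set \<Rightarrow> 'a graph" where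
  "induced G X = (X, {e \<in> edges G. e \<subseteq> X})"

definition num_edges :: "'a graph \<Rightarrow> nat" where
  "num_edges G = card (edges G)"

definition regular :: "'a graph \<Rightarrow> nat \<Rightarrow> bool" where
  "regular G d \<longleftrightarrow> (\<forall>v\<in>verts G. degree G v = d)"

text \<open>Turan graph T_k(m): vertices 0..m-1, vertex i in part (i mod k); parts have sizes
  differing by at most one.\<close>
definition turan :: "nat \<Rightarrow> nat \<Rightarrow> nat graph" where
  "turan k m = ({0..<m}, {{i, j} | i j. i < m \<and> j < m \<and> i mod k \<noteq> j mod k})"

definition graph_iso :: "'a graph \<Rightarrow> 'b graph \<Rightarrow> bool" where
  "graph_iso G H \<longleftrightarrow> (\<exists>f. bij_betw f (verts G) (verts H) \<and>
     (\<forall>x\<in>verts G. \<forall>y\<in>verts G. {x, y} \<in> edges G \<longleftrightarrow> {f x, f y} \<in> edges H))"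

definition family_F :: "nat \<Rightarrow> nat \<Rightarrow> 'a graph \<Rightarrow> bool" where
  "family_F r n G \<longleftrightarrow> simple_graph G \<and> card (verts G) = n \<and> n div r \<ge> 1 \<and>
     (let a = n div r; b = n mod r in
       (if b = 0 then regular G ((r - 1) * a)
        else (\<exists>X Y. X \<inter> Y = {} \<and> X \<union> Y = verts G \<and>
                card X = b * (a + 1) \<and> card Y = (r - b) * a \<and>
                (\<forall>x\<in>X. \<forall>y\<in>Y. {x, y} \<in> edges G) \<and>
                regular (induced G X) ((b - 1) * (a + 1)) \<and>
                regular (induced G Y) ((r - b - 1) * a))))"

end

theory Submission
  imports Defs
begin

text \<open>
  Write \<open>co(w) = V - N(w)\<close> for the closed non-neighbourhood of \<open>w\<close>. Double counting the
  edges inside \<open>N = N(u)\<close>, \<open>d = |N|\<close>, gives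
  \<open>2 e(F[N]) + (\<Sum>w\<in>N. |co(w)|) = d\<^sup>2 + (\<Sum>w\<in>N. |co(u) - N(w)|)\<close>,
  while \<open>2 e(T_(r-1)(d)) + Q(d) = d\<^sup>2\<close>, where \<open>Q(d)\<close> is the sum of the squared part sizes
  of \<open>T_(r-1)(d)\<close>. In a graph of \<open>\<F>_r(n)\<close> every vertex has \<open>|co(w)| \<in> {a, a + 1}\<close>
  (\<open>a = n div r\<close>), and every neighbourhood is split by these two values exactly like the
  parts of \<open>T_(r-1)(d)\<close>, so \<open>(\<Sum>w\<in>N. |co(w)|) = Q(d)\<close>. Hence if no neighbourhood has more
  edges than \<open>T_(r-1)(d)\<close>, then \<open>co(u) \<subseteq> N(w)\<close> for every edge \<open>uw\<close>: non-adjacency is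
  transitive, \<open>F\<close> is complete multipartite with parts \<open>co(x)\<close> of sizes \<open>a + 1\<close> and \<open>a\<close>,
  and therefore \<open>F \<cong> T_r(n)\<close>.
\<close>

lemma simple_graph_finite: "simple_graph G \<Longrightarrow> finite (verts G)"
  unfolding simple_graph_def by simp

lemma simple_graph_edgeE:
  assumes "simple_graph G" "e \<in> edges G"
  obtains x y where "x \<noteq> y" "x \<in> verts G" "y \<in> verts G" "e = {x, y}"
proof -
  have "\<forall>e\<in>edges G. \<exists>x y. x \<noteq> y \<and> x \<in> verts G \<and> y \<in> verts G \<and> e = {x, y}"
    using assms(1) unfolding simple_graph_def by simp
  then show ?thesis
    using assms(2) that by blast
qed

lemma simple_graph_edgeD:
  assumes "simple_graph G" "{x, y} \<in> edges G"
  shows "x \<in> verts G" "y \<in> verts G" "x \<noteq> y"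
  using assms by (auto elim!: simple_graph_edgeE simp: doubleton_eq_iff)

lemma finite_edges: "simple_graph G \<Longrightarrow> finite (edges G)"
  by (rule finite_subset[of _ "Pow (verts G)"])
    (auto elim: simple_graph_edgeE simp: simple_graph_finite)

lemma nbhd_subset_verts: "nbhd G u \<subseteq> verts G"
  unfolding nbhd_def by auto

lemma finite_nbhd: "simple_graph G \<Longrightarrow> finite (nbhd G u)"
  using nbhd_subset_verts simple_graph_finite by (rule finite_subset)

lemma nbhd_sym: "u \<in> verts G \<Longrightarrow> v \<in> verts G \<Longrightarrow> v \<in> nbhd G u \<longleftrightarrow> u \<in> nbhd G v"
  unfolding nbhd_def by (simp add: insert_commute)

lemma not_in_nbhd_self: "simple_graph G \<Longrightarrow> u \<notin> nbhd G u"
  unfolding nbhd_def using simple_graph_edgeD(3)[of G u u] by blast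

lemma edge_iff_in_nbhd: "y \<in> verts G \<Longrightarrow> {x, y} \<in> edges G \<longleftrightarrow> y \<in> nbhd G x"
  unfolding nbhd_def by simp

lemma nbhd_induced: "S \<subseteq> verts G \<Longrightarrow> u \<in> S \<Longrightarrow> nbhd (induced G S) u = nbhd G u \<inter> S"
  unfolding nbhd_def induced_def verts_def edges_def by auto

lemma edges_within_at_vertex:
  assumes G: "simple_graph G" and "v \<in> S" "S \<subseteq> verts G"
  shows "{e \<in> edges G. e \<subseteq> S \<and> v \<in> e} = (\<lambda>w. {v, w}) ` (nbhd G v \<inter> S)"
proof (intro set_eqI iffI)
  fix e assume e: "e \<in> {e \<in> edges G. e \<subseteq> S \<and> v \<in> e}"
  then obtain x y where "e = {x, y}"
    using G by (blast elim: simple_graph_edgeE)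
  then obtain w where "e = {v, w}"
    using e by blast
  then show "e \<in> (\<lambda>w. {v, w}) ` (nbhd G v \<inter> S)"
    using e assms(3) unfolding nbhd_def by auto
next
  fix e assume "e \<in> (\<lambda>w. {v, w}) ` (nbhd G v \<inter> S)"
  then show "e \<in> {e \<in> edges G. e \<subseteq> S \<and> v \<in> e}"
    using assms(2) unfolding nbhd_def by auto
qed

lemma card_nbhd_Int_if_regular_induced:
  "regular (induced G S) k \<Longrightarrow> S \<subseteq> verts G \<Longrightarrow> u \<in> S \<Longrightarrow> card (nbhd G u \<inter> S) = k"
  using nbhd_induced[of S G u] unfolding regular_def degree_def induced_def verts_def by auto

lemma handshake_induced:
  assumes G: "simple_graph G" and S: "S \<subseteq> verts G"
  shows "(\<Sum>v\<in>S. card (nbhd G v \<inter> S)) = 2 * num_edges (induced G S)"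
proof -
  define ES where "ES = {e \<in> edges G. e \<subseteq> S}"
  have fin: "finite S" "finite ES"
    using G S finite_edges[OF G] simple_graph_finite[OF G] unfolding ES_def
    by (auto intro: finite_subset)
  have "card (nbhd G v \<inter> S) = card {e \<in> ES. v \<in> e}" if "v \<in> S" for v
  proof -
    have "inj_on (\<lambda>w. {v, w}) (nbhd G v \<inter> S)"
      by (auto simp: inj_on_def doubleton_eq_iff)
    then show ?thesis
      using edges_within_at_vertex[OF G that S] unfolding ES_def by (simp add: card_image)
  qed
  then have "(\<Sum>v\<in>S. card (nbhd G v \<inter> S)) = (\<Sum>v\<in>S. card {e \<in> ES. v \<in> e})"
    by simp
  also have "\<dots> = (\<Sum>e\<in>ES. card {v \<in> S. v \<in> e})"
    unfolding card_eq_sum by (rule sum.swap_restrict[OF fin])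
  also have "\<dots> = (\<Sum>e\<in>ES. 2)"
  proof (rule sum.cong)
    fix e assume "e \<in> ES"
    then obtain x y where "x \<noteq> y" "e = {x, y}" "e \<subseteq> S"
      using G unfolding ES_def by (blast elim: simple_graph_edgeE)
    then have "{v \<in> S. v \<in> e} = {x, y}" by auto
    then show "card {v \<in> S. v \<in> e} = 2" using \<open>x \<noteq> y\<close> by simp
  qed simp
  finally show ?thesis
    unfolding num_edges_def induced_def edges_def ES_def by simp
qed

section \<open>Edges of Turan graphs\<close>

lemma edges_turan: "edges (turan k m) = {{i, j} | i j. i < m \<and> j < m \<and> i mod k \<noteq> j mod k}"
  unfolding turan_def edges_def by simp

lemma finite_edges_turan: "finite (edges (turan k m))"
proof (rule finite_subset)
  show "edges (turan k m) \<subseteq> Pow {..<m}"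
    unfolding edges_turan by blast
qed simp

lemma turan_edge_iff:
  assumes "i < n" "j < n"
  shows "{i, j} \<in> edges (turan r n) \<longleftrightarrow> i mod r \<noteq> j mod r"
proof
  assume "{i, j} \<in> edges (turan r n)"
  then obtain i' j' where "{i, j} = {i', j'}" "i' mod r \<noteq> j' mod r"
    unfolding edges_turan by blast
  then show "i mod r \<noteq> j mod r"
    by (auto simp: doubleton_eq_iff)
next
  assume "i mod r \<noteq> j mod r"
  then show "{i, j} \<in> edges (turan r n)"
    using assms unfolding edges_turan by blast
qed

lemma part_sizes_sum: "s \<le> k \<Longrightarrow> s * (q + 1) + (k - s) * q = k * q + s"
  for s k q :: nat
  by (simp add: algebra_simps diff_mult_distrib)

text \<open>\<open>T_k(d)\<close> has \<open>d mod k\<close> parts of size \<open>d div k + 1\<close> and \<open>k - d mod k\<close> parts of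
  size \<open>d div k\<close>.\<close>

definition turan_part_sq_sum :: "nat \<Rightarrow> nat \<Rightarrow> nat" where
  "turan_part_sq_sum k d = d mod k * (d div k + 1)^2 + (k - d mod k) * (d div k)^2"

lemma turan_part_sq_sum_eq:
  assumes "s \<le> k"
  shows "turan_part_sq_sum k (s * (q + 1) + (k - s) * q) = s * (q + 1)^2 + (k - s) * q^2"
proof (cases "s = k")
  case True
  then show ?thesis
    by (cases "k = 0") (simp_all add: turan_part_sq_sum_def)
next
  case False
  with assms have "s < k" by simp
  have "(k * q + s) mod k = s" "(k * q + s) div k = q"
    using \<open>s < k\<close> by simp_all
  then show ?thesis
    unfolding turan_part_sq_sum_def part_sizes_sum[OF assms] by simp
qed

lemma turan_part_sq_sum_Suc:
  assumes "k > 0"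
  shows "turan_part_sq_sum k (Suc d) = turan_part_sq_sum k d + 2 * (d div k) + 1"
proof -
  define s q where "s = d mod k" and "q = d div k"
  have "s < k"
    unfolding s_def using assms by simp
  then obtain t where k: "k = Suc s + t"
    by (auto dest: less_imp_Suc_add)
  have "d = s + k * q"
    unfolding s_def q_def by simp
  then have d: "d = s * (q + 1) + (k - s) * q" and Suc_d: "Suc d = Suc s * (q + 1) + (k - Suc s) * q"
    unfolding k by (simp_all add: algebra_simps)
  have "turan_part_sq_sum k d = s * (q + 1)^2 + (k - s) * q^2"
    by (subst d, rule turan_part_sq_sum_eq) (simp add: k)
  moreover have "turan_part_sq_sum k (Suc d) = Suc s * (q + 1)^2 + (k - Suc s) * q^2"
    by (subst Suc_d, rule turan_part_sq_sum_eq) (simp add: k)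
  ultimately show ?thesis
    unfolding q_def[symmetric] by (simp add: k power2_eq_square algebra_simps)
qed

lemma card_residue_class_below:
  assumes "k > 0"
  shows "card {i. i < d \<and> i mod k = d mod k} = d div k"
proof -
  have "{i. i < d \<and> i mod k = d mod k} = (\<lambda>t. d mod k + k * t) ` {..<d div k}"
  proof (intro set_eqI iffI)
    fix i assume "i \<in> {i. i < d \<and> i mod k = d mod k}"
    then have "i < d" "i = d mod k + k * (i div k)"
      by (auto, metis mod_mult_div_eq)
    moreover have "d = d mod k + k * (d div k)"
      by simp
    ultimately have "i div k < d div k"
      by (metis add_less_cancel_left mult_less_cancel1)
    then show "i \<in> (\<lambda>t. d mod k + k * t) ` {..<d div k}"
      using \<open>i = d mod k + k * (i div k)\<close> by blast
  next
    fix i assume "i \<in> (\<lambda>t. d mod k + k * t) ` {..<d div k}"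
    then obtain t where "t < d div k" "i = d mod k + k * t" by auto
    moreover have "k * t + k \<le> k * (d div k)"
      using \<open>t < d div k\<close> by (metis Suc_leI mult_Suc_right mult_le_mono2 add.commute) 
    moreover have "d mod k + k * (d div k) = d"
      by (rule mod_mult_div_eq)
    ultimately have "i < d"
      using assms by linarith
    then show "i \<in> {i. i < d \<and> i mod k = d mod k}"
      using \<open>i = d mod k + k * t\<close> by simp
  qed
  moreover have "inj_on (\<lambda>t. d mod k + k * t) {..<d div k}"
    using assms by (auto simp: inj_on_def)
  ultimately show ?thesis
    by (simp add: card_image)
qed

lemma edges_turan_Suc:
  "edges (turan k (Suc d)) = edges (turan k d) \<union> (\<lambda>i. {i, d}) ` {i. i < d \<and> i mod k \<noteq> d mod k}"
  (is "?E (Suc d) = ?E d \<union> ?new")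
proof
  show "?E (Suc d) \<subseteq> ?E d \<union> ?new"
  proof
    fix e assume "e \<in> ?E (Suc d)"
    then obtain i j where e: "e = {i, j}" "i < Suc d" "j < Suc d" "i mod k \<noteq> j mod k"
      unfolding edges_turan by blast
    then consider "i < d" "j < d" | "i = d" "j < d" | "j = d" "i < d"
      by (metis less_SucE)
    then show "e \<in> ?E d \<union> ?new"
    proof cases
      case 1
      then show ?thesis using e unfolding edges_turan by blast
    next
      case 2
      then have "e = {j, d}" using e by (simp add: insert_commute)
      then show ?thesis using e 2 by auto
    next
      case 3
      then show ?thesis using e by auto
    qed
  qed
  show "?E d \<union> ?new \<subseteq> ?E (Suc d)"
    unfolding edges_turan using less_SucI by blast
qed

lemma turan_edges_Suc:
  assumes "k > 0"
  shows "num_edges (turan k (Suc d)) = num_edges (turan k d) + (d - d div k)"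
proof -
  define A where "A = {i. i < d \<and> i mod k \<noteq> d mod k}"
  have "edges (turan k d) \<inter> (\<lambda>i. {i, d}) ` A = {}"
    unfolding edges_turan A_def by (auto simp: doubleton_eq_iff)
  moreover have "inj_on (\<lambda>i. {i, d}) A"
    unfolding A_def inj_on_def by (auto simp: doubleton_eq_iff)
  moreover have "card A = d - d div k"
  proof -
    have R: "{i. i < d \<and> i mod k = d mod k} \<subseteq> {..<d}"
      by auto
    have "A = {..<d} - {i. i < d \<and> i mod k = d mod k}"
      unfolding A_def by auto
    then show ?thesis
      using card_residue_class_below[OF assms, of d] card_Diff_subset[OF finite_subset[OF R] R]
      by simp
  qed
  moreover have "finite A"
    unfolding A_def by simp
  ultimately show ?thesis
    unfolding num_edges_def edges_turan_Suc A_def[symmetric]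
    by (simp add: card_Un_disjoint card_image finite_edges_turan)
qed

lemma turan_edges_count:
  assumes "k > 0"
  shows "2 * num_edges (turan k d) + turan_part_sq_sum k d = d^2"
proof (induction d)
  case 0
  then show ?case
    unfolding num_edges_def edges_turan turan_part_sq_sum_def by simp
next
  case (Suc d)
  have "d div k \<le> d" "(Suc d)^2 = d^2 + 2 * d + 1"
    by (simp_all add: power2_eq_square)
  then show ?case
    using Suc turan_edges_Suc[OF assms, of d] turan_part_sq_sum_Suc[OF assms, of d]
    by linarith
qed

section \<open>Counting edges inside a neighbourhood\<close>

definition co_nbhd :: "'a graph \<Rightarrow> 'a \<Rightarrow> 'a set" where
  "co_nbhd G u = verts G - nbhd G u"

lemma co_nbhd_subset_verts: "co_nbhd G u \<subseteq> verts G"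
  unfolding co_nbhd_def by blast

lemma card_co_nbhd: "simple_graph G \<Longrightarrow> card (co_nbhd G u) = card (verts G) - degree G u"
  unfolding co_nbhd_def degree_def using finite_nbhd nbhd_subset_verts by (rule card_Diff_subset)

lemma card_Int_add_card_Diff:
  assumes "finite V" "N \<subseteq> V"
  shows "card (M \<inter> N) + card (V - M) = card N + card (V - N - M)"
proof -
  have "(V - M) \<inter> N = N - M" "V - M - N = V - N - M"
    using assms(2) by auto
  then have "card (V - M) = card (N - M) + card (V - N - M)"
    using card_Int_Diff[of "V - M" N] assms(1) by simp
  moreover have "card N = card (M \<inter> N) + card (N - M)"
    using card_Int_Diff[of N M] assms finite_subset by (metis inf_commute)
  ultimately show ?thesis by simp
qed

lemma nbhd_edge_count_identity:
  assumes G: "simple_graph G"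
  shows "2 * num_edges (induced G (nbhd G u)) + (\<Sum>w\<in>nbhd G u. card (co_nbhd G w))
    = degree G u ^ 2 + (\<Sum>w\<in>nbhd G u. card (co_nbhd G u - nbhd G w))"
proof -
  let ?N = "nbhd G u"
  have "card (nbhd G w \<inter> ?N) + card (co_nbhd G w) = card ?N + card (co_nbhd G u - nbhd G w)"
    for w
    using card_Int_add_card_Diff[OF simple_graph_finite[OF G] nbhd_subset_verts]
    unfolding co_nbhd_def .
  then have "(\<Sum>w\<in>?N. card (nbhd G w \<inter> ?N) + card (co_nbhd G w))
      = (\<Sum>w\<in>?N. card ?N + card (co_nbhd G u - nbhd G w))"
    by simp
  then show ?thesis
    using handshake_induced[OF G nbhd_subset_verts]
    by (simp add: sum.distrib degree_def power2_eq_square)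
qed

lemma co_nbhd_subset_nbhd_if_tight:
  assumes G: "simple_graph G"
    and tight: "2 * num_edges (induced G (nbhd G u)) + (\<Sum>w\<in>nbhd G u. card (co_nbhd G w))
      \<le> degree G u ^ 2"
    and w: "w \<in> nbhd G u"
  shows "co_nbhd G u \<subseteq> nbhd G w"
proof -
  have "(\<Sum>w\<in>nbhd G u. card (co_nbhd G u - nbhd G w)) = 0"
    using tight nbhd_edge_count_identity[OF G, of u] by simp
  then have "card (co_nbhd G u - nbhd G w) = 0"
    using w finite_nbhd[OF G] by simp
  moreover have "finite (co_nbhd G u)"
    using co_nbhd_subset_verts simple_graph_finite[OF G] by (rule finite_subset)
  ultimately show ?thesis by simp
qed

section \<open>Complete multipartite graphs\<close>

definition non_adjacent :: "'a graph \<Rightarrow> 'a rel" where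
  "non_adjacent G = {(x, y). x \<in> verts G \<and> y \<in> co_nbhd G x}"

lemma non_adjacent_Image: "non_adjacent G `` {x} = (if x \<in> verts G then co_nbhd G x else {})"
  unfolding non_adjacent_def by auto

lemma equiv_non_adjacent:
  assumes G: "simple_graph G"
    and closed: "\<And>u w. u \<in> verts G \<Longrightarrow> w \<in> nbhd G u \<Longrightarrow> co_nbhd G u \<subseteq> nbhd G w"
  shows "equiv (verts G) (non_adjacent G)"
proof (rule equivI)
  show "non_adjacent G \<subseteq> verts G \<times> verts G"
    unfolding non_adjacent_def co_nbhd_def by blast
  show "refl_on (verts G) (non_adjacent G)"
    using not_in_nbhd_self[OF G] unfolding refl_on_def non_adjacent_def co_nbhd_def by auto
  show "sym (non_adjacent G)"
  proof (rule symI)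
    fix x y assume "(x, y) \<in> non_adjacent G"
    then show "(y, x) \<in> non_adjacent G"
      using nbhd_sym[of x G y] unfolding non_adjacent_def co_nbhd_def by blast
  qed
  show "trans (non_adjacent G)"
  proof (rule transI)
    fix x y z assume "(x, y) \<in> non_adjacent G" "(y, z) \<in> non_adjacent G"
    then have xyz: "x \<in> verts G" "y \<in> co_nbhd G x" "z \<in> co_nbhd G y"
      unfolding non_adjacent_def by auto
    have "z \<notin> nbhd G x"
    proof
      assume "z \<in> nbhd G x"
      then have "y \<in> nbhd G z" using closed[of x z] xyz(1,2) by blast
      moreover have "z \<in> verts G" "y \<in> verts G" using xyz unfolding co_nbhd_def by auto
      ultimately show False using xyz(3) nbhd_sym[of y G z] unfolding co_nbhd_def by blast
    qed
    then show "(x, z) \<in> non_adjacent G"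
      using xyz unfolding non_adjacent_def co_nbhd_def by blast
  qed
qed

lemma edge_iff_not_non_adjacent:
  "x \<in> verts G \<Longrightarrow> y \<in> verts G \<Longrightarrow> {x, y} \<in> edges G \<longleftrightarrow> (x, y) \<notin> non_adjacent G"
  unfolding non_adjacent_def co_nbhd_def using edge_iff_in_nbhd[of y G x] by auto

lemma card_quotient_of_size:
  assumes R: "equiv V R" and fin: "finite V" and S: "S \<subseteq> V"
    and size: "\<And>x. x \<in> V \<Longrightarrow> card (R `` {x}) = k \<longleftrightarrow> x \<in> S"
  shows "k * card {C \<in> V // R. card C = k} = card S"
proof -
  let ?P = "{C \<in> V // R. card C = k}"
  have U: "\<Union> ?P = S"
  proof
    show "\<Union> ?P \<subseteq> S"
    proof
      fix y assume "y \<in> \<Union> ?P"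
      then obtain x where x: "x \<in> V" "y \<in> R `` {x}" "card (R `` {x}) = k"
        by (auto elim!: quotientE)
      then have "(x, y) \<in> R"
        by simp
      then have "R `` {y} = R `` {x}" "y \<in> V"
        using R equiv_class_eq[OF R] equiv_type[OF R] by blast+
      then show "y \<in> S"
        using size[of y] x(3) by simp
    qed
    show "S \<subseteq> \<Union> ?P"
    proof
      fix x assume "x \<in> S"
      then have "x \<in> V" "card (R `` {x}) = k"
        using S size by auto
      then show "x \<in> \<Union> ?P"
        using quotientI[of x V R] equiv_class_self[OF R, of x] by blast
    qed
  qed
  have "k * card ?P = card (\<Union> ?P)"
  proof (rule card_partition)
    show "finite ?P"
      using fin R by (simp add: finite_quotient equiv_type)
    show "finite (\<Union> ?P)"
      unfolding U using fin S by (rule finite_subset[rotated])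
    show "C1 \<inter> C2 = {}" if "C1 \<in> ?P" "C2 \<in> ?P" "C1 \<noteq> C2" for C1 C2
      using quotient_disj[OF R] that by blast
  qed simp
  then show ?thesis
    unfolding U .
qed

lemma obtain_numbering_by_size:
  assumes fin: "finite P" and "b \<le> r"
    and sizes: "\<And>C. C \<in> P \<Longrightarrow> card C = a \<or> card C = a + 1"
    and big: "card {C \<in> P. card C = a + 1} = b"
    and small: "card {C \<in> P. card C = a} = r - b"
  obtains g where "bij_betw g P {0..<r}" "\<And>C. C \<in> P \<Longrightarrow> g C < b \<longleftrightarrow> card C = a + 1"
proof -
  let ?B = "{C \<in> P. card C = a + 1}" and ?S = "{C \<in> P. card C = a}"
  obtain gB where gB: "bij_betw gB ?B {0..<b}"
    using bij_betw_iff_card[of ?B "{0..<b}"] fin big by auto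
  obtain gS where gS: "bij_betw gS ?S {b..<r}"
    using bij_betw_iff_card[of ?S "{b..<r}"] fin small by auto
  have "bij_betw (\<lambda>C. if C \<in> ?B then gB C else gS C) (?B \<union> ?S) ({0..<b} \<union> {b..<r})"
    by (rule bij_betw_disjoint_Un[OF gB gS]) auto
  moreover have "?B \<union> ?S = P" "{0..<b} \<union> {b..<r} = {0..<r}"
    using sizes \<open>b \<le> r\<close> by auto
  ultimately have "bij_betw (\<lambda>C. if C \<in> ?B then gB C else gS C) P {0..<r}"
    by simp
  moreover have "(if C \<in> ?B then gB C else gS C) < b \<longleftrightarrow> card C = a + 1" if "C \<in> P" for C
    using that sizes[OF that] bij_betwE[OF gB] bij_betwE[OF gS] by fastforce
  ultimately show ?thesis
    using that by blast
qed

lemma mult_add_less_turan_order: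
  fixes r a b g h :: nat
  assumes "g < r" and "h < (if g < b then a + 1 else a)"
  shows "r * h + g < r * a + b"
proof (cases "g < b")
  case True
  then have "r * h \<le> r * a"
    using assms(2) by simp
  then show ?thesis
    using True by linarith
next
  case False
  then have "r * (h + 1) \<le> r * a"
    using assms(2) by (intro mult_le_mono2) simp
  then show ?thesis
    using assms(1) by simp
qed

lemma obtain_bij_mod_class:
  assumes fin: "finite V" and R: "equiv V R" and card_V: "card V = r * a + b"
    and g: "bij_betw g (V // R) {0..<r}"
    and sizes: "\<And>C. C \<in> V // R \<Longrightarrow> card C = (if g C < b then a + 1 else a)"
  obtains f where "bij_betw f V {0..<r * a + b}" "\<And>x. x \<in> V \<Longrightarrow> f x mod r = g (R `` {x})"
proof -
  have "\<forall>C\<in>V // R. \<exists>h. bij_betw h C {0..<card C}"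
    using fin R by (auto intro: ex_bij_betw_finite_nat finite_subset dest: in_quotient_imp_subset)
  then obtain h where h: "\<And>C. C \<in> V // R \<Longrightarrow> bij_betw (h C) C {0..<card C}"
    by metis
  \<comment> \<open>the \<open>t\<close>-th vertex of the class numbered \<open>j\<close> goes to \<open>r t + j\<close>, in residue class \<open>j\<close>\<close>
  define f where "f x = r * h (R `` {x}) x + g (R `` {x})" for x
  have x_class: "R `` {x} \<in> V // R" "x \<in> R `` {x}" if "x \<in> V" for x
    using quotientI[OF that] equiv_class_self[OF R that] by blast+
  have g_lt: "g (R `` {x}) < r" if "x \<in> V" for x
    using bij_betwE[OF g] x_class[OF that] by auto
  have h_lt: "h (R `` {x}) x < card (R `` {x})" if "x \<in> V" for x
    using bij_betwE[OF h[OF x_class(1)[OF that]]] x_class[OF that] by auto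
  have f_mod: "f x mod r = g (R `` {x})" and f_div: "f x div r = h (R `` {x}) x" if "x \<in> V" for x
    unfolding f_def using g_lt[OF that] by simp_all
  have "inj_on f V"
  proof (rule inj_onI)
    fix x y assume xy: "x \<in> V" "y \<in> V" "f x = f y"
    then have "R `` {x} = R `` {y}"
      using f_mod bij_betw_imp_inj_on[OF g] x_class by (metis inj_onD)
    moreover have "h (R `` {x}) x = h (R `` {y}) y"
      using xy f_div by metis
    ultimately show "x = y"
      using bij_betw_imp_inj_on[OF h[OF x_class(1)[OF xy(2)]]] x_class xy by (metis inj_onD)
  qed
  moreover have "f x < r * a + b" if "x \<in> V" for x
    unfolding f_def using g_lt[OF that] h_lt[OF that] sizes[OF x_class(1)[OF that]]
    by (intro mult_add_less_turan_order) simp_all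
  ultimately have "bij_betw f V {0..<r * a + b}"
    using card_V by (intro bij_betw_imageI card_subset_eq) (auto simp: card_image)
  then show ?thesis
    using that f_mod by blast
qed

lemma graph_iso_turanI:
  fixes G :: "'a graph" and R :: "'a rel"
  assumes fin: "finite (verts G)" and R: "equiv (verts G) R"
    and card_V: "card (verts G) = r * a + b" and "b \<le> r"
    and sizes: "\<And>C. C \<in> verts G // R \<Longrightarrow> card C = a \<or> card C = a + 1"
    and big: "card {C \<in> verts G // R. card C = a + 1} = b"
    and small: "card {C \<in> verts G // R. card C = a} = r - b"
    and edge_iff: "\<And>x y. x \<in> verts G \<Longrightarrow> y \<in> verts G \<Longrightarrow> {x, y} \<in> edges G \<longleftrightarrow> (x, y) \<notin> R"
  shows "graph_iso G (turan r (r * a + b))"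
proof -
  have "finite (verts G // R)"
    using fin R by (simp add: finite_quotient equiv_type)
  then obtain g where g: "bij_betw g (verts G // R) {0..<r}"
    and g_big: "\<And>C. C \<in> verts G // R \<Longrightarrow> g C < b \<longleftrightarrow> card C = a + 1"
    using obtain_numbering_by_size[OF _ \<open>b \<le> r\<close> sizes big small] by metis
  have "card C = (if g C < b then a + 1 else a)" if "C \<in> verts G // R" for C
    using sizes[OF that] g_big[OF that] by auto
  then obtain f where f: "bij_betw f (verts G) {0..<r * a + b}"
    and f_mod: "\<And>x. x \<in> verts G \<Longrightarrow> f x mod r = g (R `` {x})"
    using obtain_bij_mod_class[OF fin R card_V g] by metis
  have "{x, y} \<in> edges G \<longleftrightarrow> {f x, f y} \<in> edges (turan r (r * a + b))"
    if "x \<in> verts G" "y \<in> verts G" for x y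
  proof -
    have "{x, y} \<in> edges G \<longleftrightarrow> R `` {x} \<noteq> R `` {y}"
      using edge_iff[OF that] R that by (simp add: eq_equiv_class_iff)
    also have "\<dots> \<longleftrightarrow> f x mod r \<noteq> f y mod r"
      using f_mod that bij_betw_imp_inj_on[OF g] R by (auto simp: quotientI inj_on_eq_iff)
    also have "\<dots> \<longleftrightarrow> {f x, f y} \<in> edges (turan r (r * a + b))"
      using bij_betwE[OF f] that by (simp add: turan_edge_iff)
    finally show ?thesis .
  qed
  then show ?thesis
    unfolding graph_iso_def using f by (auto simp: turan_def verts_def)
qed

lemma graph_iso_turan_if_equiv_non_adjacent:
  fixes G :: "'a graph"
  assumes G: "simple_graph G" and R: "equiv (verts G) (non_adjacent G)"
    and card_V: "card (verts G) = r * a + b" and "b \<le> r" and "a \<ge> 1"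
    and XV: "X \<subseteq> verts G" and card_X: "card X = b * (a + 1)"
    and co: "\<And>x. x \<in> verts G \<Longrightarrow> card (co_nbhd G x) = (if x \<in> X then a + 1 else a)"
  shows "graph_iso G (turan r (r * a + b))"
proof -
  let ?P = "verts G // non_adjacent G"
  have fin: "finite (verts G)"
    using G by (rule simple_graph_finite)
  have size: "card (non_adjacent G `` {x}) = (if x \<in> X then a + 1 else a)" if "x \<in> verts G" for x
    using co[OF that] that by (simp add: non_adjacent_Image)
  have "(a + 1) * card {C \<in> ?P. card C = a + 1} = (a + 1) * b"
    using card_quotient_of_size[OF R fin XV, of "a + 1"] size card_X by (simp add: mult.commute)
  then have big: "card {C \<in> ?P. card C = a + 1} = b"
    by (simp only: mult_cancel1) simp
  have "a * card {C \<in> ?P. card C = a} = a * (r - b)"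
  proof -
    have "card (verts G - X) = (r - b) * a"
      using card_Diff_subset[OF finite_subset[OF XV fin] XV] card_V card_X \<open>b \<le> r\<close>
      by (simp add: algebra_simps diff_mult_distrib)
    then show ?thesis
      using card_quotient_of_size[OF R fin, of "verts G - X" a] size by (simp add: mult.commute)
  qed
  then have small: "card {C \<in> ?P. card C = a} = r - b"
    using \<open>a \<ge> 1\<close> by (simp only: mult_cancel1) simp
  have sizes: "card C = a \<or> card C = a + 1" if "C \<in> ?P" for C
    using that size by (auto elim!: quotientE)
  show ?thesis
    using graph_iso_turanI[OF fin R card_V \<open>b \<le> r\<close> sizes big small edge_iff_not_non_adjacent] .
qed

section \<open>The family \<open>\<F>_r(n)\<close>\<close>

lemma nbhd_complete_join:
  assumes "X \<inter> Y = {}" "X \<union> Y = verts G" and XY_edges: "\<forall>x\<in>X. \<forall>y\<in>Y. {x, y} \<in> edges G"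
  shows "u \<in> X \<Longrightarrow> nbhd G u - X = Y" and "u \<in> Y \<Longrightarrow> nbhd G u \<inter> X = X"
proof -
  show "nbhd G u - X = Y" if "u \<in> X"
    using assms that nbhd_subset_verts[of G u] unfolding nbhd_def by auto
  show "nbhd G u \<inter> X = X" if "u \<in> Y"
    using assms that unfolding nbhd_def by (auto simp: insert_commute)
qed

lemma family_F_nbhd_profile:
  fixes F :: "'a graph"
  assumes fam: "family_F r n F"
  defines "a \<equiv> n div r" and "b \<equiv> n mod r"
  obtains X where "X \<subseteq> verts F" "card X = b * (a + 1)"
    and "\<And>u. u \<in> verts F \<Longrightarrow> card (nbhd F u \<inter> X) = (if u \<in> X then b - 1 else b) * (a + 1)"
    and "\<And>u. u \<in> verts F \<Longrightarrow> card (nbhd F u - X) = (r - 1 - (if u \<in> X then b - 1 else b)) * a"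
proof (cases "b = 0")
  case True
  then have "regular F ((r - 1) * a)"
    using fam unfolding family_F_def a_def b_def Let_def by simp
  then show ?thesis
    using that[of "{}"] True unfolding regular_def degree_def by simp
next
  case False
  then obtain X Y where XY: "X \<inter> Y = {}" "X \<union> Y = verts F"
    and card_X: "card X = b * (a + 1)" and card_Y: "card Y = (r - b) * a"
    and XY_edges: "\<forall>x\<in>X. \<forall>y\<in>Y. {x, y} \<in> edges F"
    and reg_X: "regular (induced F X) ((b - 1) * (a + 1))"
    and reg_Y: "regular (induced F Y) ((r - b - 1) * a)"
    using fam unfolding family_F_def a_def b_def Let_def by auto
  have XV: "X \<subseteq> verts F" and YV: "Y \<subseteq> verts F" and Y: "Y = verts F - X"
    using XY by auto
  have "card (nbhd F u \<inter> X) = (b - 1) * (a + 1)" "card (nbhd F u - X) = (r - b) * a"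
    if "u \<in> X" for u
    using card_nbhd_Int_if_regular_induced[OF reg_X XV that]
      nbhd_complete_join(1)[OF XY XY_edges that] card_Y by simp_all
  moreover have "card (nbhd F u \<inter> X) = b * (a + 1)" "card (nbhd F u - X) = (r - b - 1) * a"
    if "u \<in> Y" for u
  proof -
    show "card (nbhd F u \<inter> X) = b * (a + 1)"
      using nbhd_complete_join(2)[OF XY XY_edges that] card_X by simp
    have "nbhd F u - X = nbhd F u \<inter> Y"
      using nbhd_subset_verts[of F u] unfolding Y by blast
    then show "card (nbhd F u - X) = (r - b - 1) * a"
      using card_nbhd_Int_if_regular_induced[OF reg_Y YV that] by simp
  qed
  ultimately show ?thesis
    using that[OF XV card_X] False Y by (auto simp: diff_diff_add)
qed

lemma sum_card_co_nbhd_eq_turan_part_sq_sum: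
  assumes G: "simple_graph G"
    and co: "\<And>x. x \<in> verts G \<Longrightarrow> card (co_nbhd G x) = (if x \<in> X then a + 1 else a)"
    and "s \<le> k" and "card (nbhd G u \<inter> X) = s * (a + 1)" and "card (nbhd G u - X) = (k - s) * a"
  shows "(\<Sum>w\<in>nbhd G u. card (co_nbhd G w)) = turan_part_sq_sum k (degree G u)"
proof -
  let ?N = "nbhd G u"
  have "(\<Sum>w\<in>?N. card (co_nbhd G w)) = (\<Sum>w\<in>?N. if w \<in> X then a + 1 else a)"
    using co nbhd_subset_verts[of G u] by (intro sum.cong) auto
  also have "\<dots> = (a + 1) * card (?N \<inter> X) + a * card (?N - X)"
    by (simp add: sum.If_cases[OF finite_nbhd[OF G]] Diff_eq)
  also have "\<dots> = turan_part_sq_sum k (s * (a + 1) + (k - s) * a)"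
    using assms(4,5) turan_part_sq_sum_eq[OF \<open>s \<le> k\<close>] by (simp add: power2_eq_square algebra_simps)
  also have "s * (a + 1) + (k - s) * a = degree G u"
    using assms(4,5) card_Int_Diff[OF finite_nbhd[OF G], of u X] unfolding degree_def by simp
  finally show ?thesis .
qed

lemma family_F_structure:
  fixes F :: "'a graph"
  assumes fam: "family_F r n F"
  defines "a \<equiv> n div r" and "b \<equiv> n mod r"
  obtains X where "X \<subseteq> verts F" "card X = b * (a + 1)"
    and "\<And>x. x \<in> verts F \<Longrightarrow> card (co_nbhd F x) = (if x \<in> X then a + 1 else a)"
    and "\<And>u. u \<in> verts F \<Longrightarrow>
      (\<Sum>w\<in>nbhd F u. card (co_nbhd F w)) = turan_part_sq_sum (r - 1) (degree F u)"
proof -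
  have G: "simple_graph F" and card_V: "card (verts F) = n" and "a \<ge> 1"
    using fam unfolding family_F_def a_def by auto
  then have "r > 0"
    unfolding a_def by (cases "r = 0") auto
  then have "b < r"
    unfolding b_def by simp
  have "r * a = (r - 1) * a + a"
    using \<open>r > 0\<close> by (cases r) simp_all
  then have n: "n = (r - 1) * a + a + b"
    unfolding a_def b_def by (metis mult.commute div_mult_mod_eq)
  obtain X where XV: "X \<subseteq> verts F" and card_X: "card X = b * (a + 1)"
    and in_X: "\<And>u. u \<in> verts F \<Longrightarrow> card (nbhd F u \<inter> X) = (if u \<in> X then b - 1 else b) * (a + 1)"
    and out_X: "\<And>u. u \<in> verts F \<Longrightarrow> card (nbhd F u - X) = (r - 1 - (if u \<in> X then b - 1 else b)) * a"
    using family_F_nbhd_profile[OF fam] unfolding a_def b_def by metis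
  have "finite X"
    using XV simple_graph_finite[OF G] by (rule finite_subset)
  then have b: "b \<noteq> 0" if "x \<in> X" for x
    using card_X that by (metis card_gt_0_iff empty_iff mult_is_0 not_gr0)
  then have s_le: "(if u \<in> X then b - 1 else b) \<le> r - 1" for u
    using \<open>b < r\<close> by auto
  have co: "card (co_nbhd F x) = (if x \<in> X then a + 1 else a)" if "x \<in> verts F" for x
  proof -
    have "degree F x = card (nbhd F x \<inter> X) + card (nbhd F x - X)"
      unfolding degree_def using card_Int_Diff[OF finite_nbhd[OF G]] .
    also have "\<dots> = (r - 1) * a + (if x \<in> X then b - 1 else b)"
      unfolding in_X[OF that] out_X[OF that] by (rule part_sizes_sum[OF s_le])
    finally show ?thesis
      using card_co_nbhd[OF G, of x] card_V n b[of x] by auto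
  qed
  show ?thesis
    using that[OF XV card_X co] sum_card_co_nbhd_eq_turan_part_sq_sum[OF G co s_le in_X out_X] by blast
qed

theorem lemma3p6:
  fixes F :: "'a graph" and r n :: nat
  assumes "r \<ge> 2"
    and "family_F r n F"
    and "\<not> graph_iso F (turan r n)"
  shows "\<exists>u\<in>verts F. num_edges (induced F (nbhd F u)) > num_edges (turan (r - 1) (degree F u))"
proof (rule ccontr)
  assume "\<not> ?thesis"
  then have sparse: "num_edges (induced F (nbhd F u)) \<le> num_edges (turan (r - 1) (degree F u))"
    if "u \<in> verts F" for u
    using that by (simp add: not_less)
  define a b where "a = n div r" and "b = n mod r"
  have G: "simple_graph F" and card_V: "card (verts F) = r * a + b" and "a \<ge> 1"
    using assms(2) unfolding family_F_def a_def b_def by auto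
  have "b \<le> r"
    unfolding b_def using assms(1) by simp
  obtain X where X: "X \<subseteq> verts F" "card X = b * (a + 1)"
    and co: "\<And>x. x \<in> verts F \<Longrightarrow> card (co_nbhd F x) = (if x \<in> X then a + 1 else a)"
    and sum_co: "\<And>u. u \<in> verts F \<Longrightarrow>
      (\<Sum>w\<in>nbhd F u. card (co_nbhd F w)) = turan_part_sq_sum (r - 1) (degree F u)"
    using family_F_structure[OF assms(2)] unfolding a_def b_def by metis
  have "co_nbhd F u \<subseteq> nbhd F w" if "u \<in> verts F" "w \<in> nbhd F u" for u w
    using co_nbhd_subset_nbhd_if_tight[OF G _ that(2)] sparse[OF that(1)] sum_co[OF that(1)]
      turan_edges_count[of "r - 1" "degree F u"] assms(1) by simp
  then have "equiv (verts F) (non_adjacent F)"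
    by (rule equiv_non_adjacent[OF G])
  then have "graph_iso F (turan r (r * a + b))"
    using graph_iso_turan_if_equiv_non_adjacent[OF G _ card_V \<open>b \<le> r\<close> \<open>a \<ge> 1\<close> X co] by blast
  then show False
    using assms(3) unfolding a_def b_def by simp
qed

end
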